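(* Assume the regularity conditions (C1) and (C2) below, let $\hat\Lambda$ be a given selection rule, and let $\hat{\boldsymbol\theta}$ be a coherent estimator of $\boldsymbol\theta$ (true support $\Lambda$) whose selective biases $\mathbf b_k(\boldsymbol\theta,\Lambda)$ are differentiable in $\boldsymbol\theta_\Lambda$. Then the MSSE satisfies $$\mathrm{E}_{\boldsymbol\theta_\Lambda}[\mathbf C(\hat{\boldsymbol\theta},\hat\Lambda,\boldsymbol\theta)]\succeq \mathbf B_{\mathrm{sCRB}}(\boldsymbol\theta_\Lambda):=\sum_{k=1}^K\pi_k(\boldsymbol\theta_\Lambda)\Big(\boldsymbol\Psi_k(\boldsymbol\theta,\Lambda)+\mathbf b_k(\boldsymbol\theta,\Lambda)\mathbf b_k^T(\boldsymbol\theta,\Lambda)\Big),$$ where $\boldsymbol\Psi_k(\boldsymbol\theta,\Lambda)=(\mathbf D_k(\Lambda)+\mathbf G_k(\boldsymbol\theta,\Lambda))\mathbf J_k^{-1}(\boldsymbol\theta_\Lambda)(\mathbf D_k(\Lambda)+\mathbf G_k(\boldsymbol\theta,\Lambda))^T$ (sum over $k$ with $\pi_k(\boldsymbol\theta_\Lambda)\neq0$). Furthermore, the MSE matrix satisfies $$\mathrm{MSE}(\hat{\boldsymbol\theta},\boldsymbol\theta,\Lambda)\succeq \mathbf B_{\mathrm{sCRB}}(\boldsymbol\theta_\Lambda)+\sum_{k=1}^K\pi_k(\boldsymbol\theta_\Lambda)\boldsymbol\theta^{\mathrm{ZP}}_{\Lambda_k^c}(\boldsymbol\theta^{\mathrm{ZP}}_{\Lambda_k^c})^T-\sum_{k=1}^K\pi_k(\boldsymbol\theta_\Lambda)\Big(\boldsymbol\theta^{\mathrm{ZP}}_{\Lambda_k^c}\mathbf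 b_k^T(\boldsymbol\theta,\Lambda)+\mathbf b_k(\boldsymbol\theta,\Lambda)(\boldsymbol\theta^{\mathrm{ZP}}_{\Lambda_k^c})^T\Big).$$ In particular, if $\mathbf b_k\equiv\mathbf 0$ for all $k$, then $\mathbf B_{\mathrm{sCRB}}(\boldsymbol\theta_\Lambda)=\sum_{k=1}^K\pi_k(\boldsymbol\theta_\Lambda)\mathbf D_k(\Lambda)\mathbf J_k^{-1}(\boldsymbol\theta_\Lambda)\mathbf D_k^T(\Lambda)$.
   Context: Setting (estimation after model selection). $\boldsymbol\theta\in\mathbb{R}^M$ is an unknown deterministic vector. A finite family of nonempty candidate support sets $\Lambda_1,\dots,\Lambda_K\subseteq\{1,\dots,M\}$ is known; the true support $\Lambda$ is one of them, $\boldsymbol\theta_{\Lambda^c}=\mathbf 0$. $\boldsymbol\theta_S$ is the subvector indexed by $S$; $[\Lambda]_l$ denotes the $l$-th element of $\Lambda$ (in increasing order). The observation $\mathbf x\in\Omega_{\mathbf x}$ has pdf $f(\mathbf x;\boldsymbol\theta_\Lambda)$; $\mathrm{E}_{\boldsymbol\theta_\Lambda}$ is expectation under it. A selection rule is a deterministic measurable $\hat\Lambda:\Omega_{\mathbf x}\to\{\Lambda_1,\dots,\Lambda_K\}$; $\mathcal A_k=\{\mathbf x:\hat\Lambda(\mathbf x)=\Lambda_k\}$, $\pi_k(\boldsymbol\theta_\Lambda)=\Pr(\hat\Lambda=\Lambda_k;\boldsymbol\theta_\Lambda)$, and for $\pi_k\ne0$, $f(\mathbf x\mid\hat\Lambda=\Lambda_k;\boldsymbol\theta_\Lambda)=f(\mathbf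 x;\boldsymbol\theta_\Lambda)/\pi_k(\boldsymbol\theta_\Lambda)$ for $\mathbf x\in\mathcal A_k$. Zero-padding: $\mathbf a^{\mathrm{ZP}}_S\in\mathbb{R}^M$ has entry $a_m$ if $m\in S$, else $0$. Estimators $\hat{\boldsymbol\theta}:\Omega_{\mathbf x}\to\mathbb{R}^M$ have finite second moments; coherent means $\hat\theta_m(\mathbf x)=0$ whenever $m\notin\hat\Lambda(\mathbf x)$. SSE cost $\mathbf C(\hat{\boldsymbol\theta},\hat\Lambda,\boldsymbol\theta)=(\hat{\boldsymbol\theta}^{\mathrm{ZP}}_{\hat\Lambda}-\boldsymbol\theta^{\mathrm{ZP}}_{\hat\Lambda})(\hat{\boldsymbol\theta}^{\mathrm{ZP}}_{\hat\Lambda}-\boldsymbol\theta^{\mathrm{ZP}}_{\hat\Lambda})^T$; MSSE is its expectation; $\mathrm{MSE}(\hat{\boldsymbol\theta},\boldsymbol\theta,\Lambda)=\mathrm{E}_{\boldsymbol\theta_\Lambda}[(\hat{\boldsymbol\theta}-\boldsymbol\theta)(\hat{\boldsymbol\theta}-\boldsymbol\theta)^T]$. Selective bias $\mathbf b_k(\boldsymbol\theta,\Lambda)=\mathrm{E}_{\boldsymbol\theta_\Lambda}[\hat{\boldsymbol\theta}^{\mathrm{ZP}}_{\Lambda_k}-\boldsymbol\theta^{\mathrm{ZP}}_{\Lambda_k}\mid\hat\Lambda=\Lambda_k]$; $\mathbf G_k(\boldsymbol\theta,\Lambda)=\nabla_{\boldsymbol\theta_\Lambda}\mathbf b_k(\boldsymbol\theta,\Lambda)\in\mathbb{R}^{M\times|\Lambda|}$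 (entry $(m,l)$ is $\partial[\mathbf b_k]_m/\partial[\boldsymbol\theta_\Lambda]_l$). Post-model-selection score: $\boldsymbol\upsilon_k(\mathbf x,\boldsymbol\theta_\Lambda)=\nabla^T_{\boldsymbol\theta_\Lambda}\log f(\mathbf x\mid\hat\Lambda=\Lambda_k;\boldsymbol\theta_\Lambda)$ for $\mathbf x\in\mathcal A_k$ (a $|\Lambda|$-dimensional column vector). Selective FIM: $\mathbf J_k(\boldsymbol\theta_\Lambda)=\mathrm{E}_{\boldsymbol\theta_\Lambda}[\boldsymbol\upsilon_k\boldsymbol\upsilon_k^T\mid\hat\Lambda=\Lambda_k]$. $\mathbf D_k(\Lambda)$ is the $M\times|\Lambda|$ 0-1 matrix with $[\mathbf D_k(\Lambda)]_{m,l}=1$ if $m\in\Lambda_k$ and $m=[\Lambda]_l$, and $0$ otherwise. Regularity: (C1) the vectors $\boldsymbol\upsilon_k$ exist and the matrices $\mathbf J_k(\boldsymbol\theta_\Lambda)$ are well defined and nonsingular for all $\boldsymbol\theta_\Lambda\in\mathbb{R}^{|\Lambda|}$, $k=1,\dots,K$; (C2) for all $k$, every measurable $g:\Omega_{\mathbf x}\to\mathbb{R}$ (for which the integrals exist) and all $\boldsymbol\theta_\Lambda$, $\nabla_{\boldsymbol\theta_\Lambda}\int_{\mathcal A_k}g(\mathbf x)f(\mathbf x\mid\hat\Lambda=\Lambda_k;\boldsymbol\theta_\Lambda)\,d\mathbf x=\int_{\mathcal A_k}g(\mathbf x)\nabla_{\boldsymbol\theta_\Lambda}f(\mathbf x\mid\hat\Lambda=\Lambda_k;\boldsymbol\theta_\Lambda)\,d\mathbf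 x$. $\succeq$ is the positive semidefinite order. *)

theory Defs
  imports "HOL-Analysis.Analysis"
begin

text \<open>Index types: 'm indexes the full parameter vector (the index set {1..M}),
  'l indexes the subvector theta_Lambda; idx l = [Lambda]_l.\<close>

definition psd_ge :: "real^'n^'n \<Rightarrow> real^'n^'n \<Rightarrow> bool" where
  "psd_ge A B \<longleftrightarrow> (\<forall>v::real^'n. v \<bullet> ((A - B) *v v) \<ge> 0)"

definition outer :: "real^'m \<Rightarrow> real^'n \<Rightarrow> real^'n^'m" where
  "outer u v = (\<chi> i j. u $ i * v $ j)"

definition zp :: "'m set \<Rightarrow> real^'m \<Rightarrow> real^'m" where
  "zp S a = (\<chi> m. if m \<in> S then a $ m else 0)"

text \<open>theta as a function of theta_Lambda: zero outside Lambda = range idx.\<close>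
definition emb :: "('l \<Rightarrow> 'm) \<Rightarrow> real^'l \<Rightarrow> real^'m" where
  "emb idx t = (\<chi> m. if m \<in> range idx then t $ (inv idx m) else 0)"

definition Dmat :: "'m set \<Rightarrow> ('l \<Rightarrow> 'm) \<Rightarrow> real^'l^'m" where
  "Dmat S idx = (\<chi> m l. if m \<in> S \<and> m = idx l then 1 else 0)"

definition partial_at :: "(real^'l \<Rightarrow> real) \<Rightarrow> real^'l \<Rightarrow> 'l \<Rightarrow> real" where
  "partial_at g t l = deriv (\<lambda>s. g (t + s *\<^sub>R axis l 1)) 0"

definition has_partial :: "(real^'l \<Rightarrow> real) \<Rightarrow> real^'l \<Rightarrow> 'l \<Rightarrow> bool" where
  "has_partial g t l \<longleftrightarrow> (\<lambda>s. g (t + s *\<^sub>R axis l 1)) differentiable (at 0)"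

definition grad :: "(real^'l \<Rightarrow> real) \<Rightarrow> real^'l \<Rightarrow> real^'l" where
  "grad g t = (\<chi> l. partial_at g t l)"

definition gradmat :: "(real^'l \<Rightarrow> real^'m) \<Rightarrow> real^'l \<Rightarrow> real^'l^'m" where
  "gradmat h t = (\<chi> m l. partial_at (\<lambda>s. h s $ m) t l)"

definition sel_prob :: "'x measure \<Rightarrow> ('x \<Rightarrow> 'p \<Rightarrow> real) \<Rightarrow> 'x set \<Rightarrow> 'p \<Rightarrow> real" where
  "sel_prob \<mu> f A t = (LINT x:A|\<mu>. f x t)"

definition cond_pdf :: "'x measure \<Rightarrow> ('x \<Rightarrow> 'p \<Rightarrow> real) \<Rightarrow> 'x set \<Rightarrow> 'x \<Rightarrow> 'p \<Rightarrow> real" where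
  "cond_pdf \<mu> f A x t = f x t / sel_prob \<mu> f A t"

definition cond_exp :: "'x measure \<Rightarrow> ('x \<Rightarrow> 'p \<Rightarrow> real) \<Rightarrow> 'x set \<Rightarrow> ('x \<Rightarrow> real) \<Rightarrow> 'p \<Rightarrow> real" where
  "cond_exp \<mu> f A g t = (LINT x:A|\<mu>. g x * cond_pdf \<mu> f A x t)"

definition cond_expv :: "'x measure \<Rightarrow> ('x \<Rightarrow> 'p \<Rightarrow> real) \<Rightarrow> 'x set \<Rightarrow> ('x \<Rightarrow> real^'m) \<Rightarrow> 'p \<Rightarrow> real^'m" where
  "cond_expv \<mu> f A g t = (\<chi> i. cond_exp \<mu> f A (\<lambda>x. g x $ i) t)"

definition Emat :: "'x measure \<Rightarrow> ('x \<Rightarrow> 'p \<Rightarrow> real) \<Rightarrow> ('x \<Rightarrow> real^'n^'m) \<Rightarrow> 'p \<Rightarrow> real^'n^'m" where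
  "Emat \<mu> f C t = (\<chi> i j. LINT x|\<mu>. C x $ i $ j * f x t)"

definition score :: "'x measure \<Rightarrow> ('x \<Rightarrow> real^'l \<Rightarrow> real) \<Rightarrow> 'x set \<Rightarrow> 'x \<Rightarrow> real^'l \<Rightarrow> real^'l" where
  "score \<mu> f A x t = grad (\<lambda>s. ln (cond_pdf \<mu> f A x s)) t"

definition sel_FIM :: "'x measure \<Rightarrow> ('x \<Rightarrow> real^'l \<Rightarrow> real) \<Rightarrow> 'x set \<Rightarrow> real^'l \<Rightarrow> real^'l^'l" where
  "sel_FIM \<mu> f A t = (\<chi> i j. cond_exp \<mu> f A (\<lambda>x. score \<mu> f A x t $ i * score \<mu> f A x t $ j) t)"

definition sel_bias :: "'x measure \<Rightarrow> ('x \<Rightarrow> real^'l \<Rightarrow> real) \<Rightarrow> 'x set \<Rightarrow> 'm set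
    \<Rightarrow> ('l \<Rightarrow> 'm) \<Rightarrow> ('x \<Rightarrow> real^'m) \<Rightarrow> real^'l \<Rightarrow> real^'m" where
  "sel_bias \<mu> f A S idx th t = cond_expv \<mu> f A (\<lambda>x. zp S (th x) - zp S (emb idx t)) t"

definition sel_region :: "'x measure \<Rightarrow> ('x \<Rightarrow> 'm set) \<Rightarrow> 'm set \<Rightarrow> 'x set" where
  "sel_region \<mu> sel S = {x \<in> space \<mu>. sel x = S}"

definition sCRB :: "'x measure \<Rightarrow> ('x \<Rightarrow> real^'l \<Rightarrow> real) \<Rightarrow> nat \<Rightarrow> (nat \<Rightarrow> 'm set)
    \<Rightarrow> ('x \<Rightarrow> 'm set) \<Rightarrow> ('l \<Rightarrow> 'm) \<Rightarrow> ('x \<Rightarrow> real^'m) \<Rightarrow> real^'l \<Rightarrow> real^'m^'m" where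
  "sCRB \<mu> f K Lam sel idx th t =
     (\<Sum>k\<in>{k\<in>{1..K}. sel_prob \<mu> f (sel_region \<mu> sel (Lam k)) t \<noteq> 0}.
        sel_prob \<mu> f (sel_region \<mu> sel (Lam k)) t *\<^sub>R
          (let A = sel_region \<mu> sel (Lam k);
               b = sel_bias \<mu> f A (Lam k) idx th;
               DG = Dmat (Lam k) idx + gradmat b t
           in DG ** matrix_inv (sel_FIM \<mu> f A t) ** transpose DG + outer (b t) (b t)))"

end

theory Submission
  imports Defs
begin

text \<open>
  On each selection region A_k the conditional densities f(x | \<Lambda>_k; \<theta>_\<Lambda>) form a regular family
  with score \<upsilon>_k and Fisher information J_k. Differentiating the conditional mean of the
  estimator under the integral sign (C2), with \<partial>f = \<upsilon>_k f, identifies D_k + G_k with the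
  conditional cross-moment of the estimation error and the score, and shows that the score has
  conditional mean zero. For each direction v, Cauchy--Schwarz in L2(A_k) then bounds
  v^T (\<Psi>_k + b_k b_k^T) v by the conditional second moment of v^T (th - \<theta>) restricted to \<Lambda>_k.
  Averaging over the partition {A_k} with weights \<pi>_k gives the MSSE bound. For the MSE,
  coherence gives th - \<theta> = (th - \<theta>)^ZP_\<Lambda>_k - \<theta>^ZP_(\<Lambda>_k^c) on A_k, and expanding the square
  produces the additional terms.
\<close>

section \<open>Weighted square integrability\<close>

definition L2 :: "'x measure \<Rightarrow> ('x \<Rightarrow> real) \<Rightarrow> ('x \<Rightarrow> real) \<Rightarrow> bool" where
  "L2 M w g \<longleftrightarrow> g \<in> borel_measurable M \<and> integrable M (\<lambda>x. g x * g x * w x)"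

lemma L2_mult_integrable:
  assumes wm: "w \<in> borel_measurable M" and wn: "\<And>x. x \<in> space M \<Longrightarrow> 0 \<le> w x"
    and g: "L2 M w g" and h: "L2 M w h"
  shows "integrable M (\<lambda>x. g x * h x * w x)"
proof (rule Bochner_Integration.integrable_bound[where f="\<lambda>x. g x * g x * w x + h x * h x * w x"])
  show "integrable M (\<lambda>x. g x * g x * w x + h x * h x * w x)"
    using g h unfolding L2_def by auto
  show "(\<lambda>x. g x * h x * w x) \<in> borel_measurable M"
    using g h wm unfolding L2_def by auto
  show "AE x in M. norm (g x * h x * w x) \<le> norm (g x * g x * w x + h x * h x * w x)"
  proof (rule AE_I2)
    fix x assume "x \<in> space M"
    then have w0: "0 \<le> w x" by (rule wn)
    have "2 * (\<bar>g x\<bar> * \<bar>h x\<bar>) \<le> g x * g x + h x * h x"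
      using sum_squares_bound[of "\<bar>g x\<bar>" "\<bar>h x\<bar>"] by (simp add: power2_eq_square mult.assoc)
    then have "\<bar>g x * h x\<bar> \<le> g x * g x + h x * h x"
      unfolding abs_mult using mult_nonneg_nonneg[OF abs_ge_zero abs_ge_zero, of "g x" "h x"] by linarith
    then show "norm (g x * h x * w x) \<le> norm (g x * g x * w x + h x * h x * w x)"
      using w0 by (simp add: abs_mult mult_right_mono distrib_right[symmetric])
  qed
qed

lemma L2_add:
  assumes wm: "w \<in> borel_measurable M" and wn: "\<And>x. x \<in> space M \<Longrightarrow> 0 \<le> w x"
    and g: "L2 M w g" and h: "L2 M w h"
  shows "L2 M w (\<lambda>x. g x + h x)"
proof -
  have "integrable M (\<lambda>x. g x * g x * w x + 2 * (g x * h x * w x) + h x * h x * w x)"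
    using g h L2_mult_integrable[OF wm wn g h] unfolding L2_def by auto
  moreover have "(\<lambda>x. g x * g x * w x + 2 * (g x * h x * w x) + h x * h x * w x)
      = (\<lambda>x. (g x + h x) * (g x + h x) * w x)"
    by (simp add: algebra_simps)
  ultimately show ?thesis using g h unfolding L2_def by auto
qed

lemma L2_scale:
  assumes "L2 M w g"
  shows "L2 M w (\<lambda>x. c * g x)"
proof -
  have "integrable M (\<lambda>x. (c * c) * (g x * g x * w x))"
    using assms unfolding L2_def by auto
  then show ?thesis using assms unfolding L2_def by (auto simp: mult_ac)
qed

lemma L2_const:
  assumes "integrable M w"
  shows "L2 M w (\<lambda>x. c)"
  using assms unfolding L2_def by (auto simp: mult.assoc)

lemma L2_diff:
  assumes wm: "w \<in> borel_measurable M" and wn: "\<And>x. x \<in> space M \<Longrightarrow> 0 \<le> w x"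
    and g: "L2 M w g" and h: "L2 M w h"
  shows "L2 M w (\<lambda>x. g x - h x)"
  using L2_add[OF wm wn g L2_scale[OF h, of "-1"]] by simp

lemma L2_sum:
  assumes wm: "w \<in> borel_measurable M" and wn: "\<And>x. x \<in> space M \<Longrightarrow> 0 \<le> w x"
    and wi: "integrable M w" and g: "\<And>i. i \<in> I \<Longrightarrow> L2 M w (g i)"
  shows "L2 M w (\<lambda>x. \<Sum>i\<in>I. g i x)"
  using g
proof (induction I rule: infinite_finite_induct)
  case (insert i I)
  then show ?case by (simp add: L2_add[OF wm wn])
qed (simp_all add: L2_const[OF wi])

lemma L2_inner:
  fixes G :: "'x \<Rightarrow> real^'n"
  assumes wm: "w \<in> borel_measurable M" and wn: "\<And>x. x \<in> space M \<Longrightarrow> 0 \<le> w x"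
    and wi: "integrable M w" and G: "\<And>i. L2 M w (\<lambda>x. G x $ i)"
  shows "L2 M w (\<lambda>x. v \<bullet> G x)"
proof -
  have "L2 M w (\<lambda>x. \<Sum>i\<in>UNIV. v $ i * G x $ i)"
    using wn by (intro L2_sum[OF wm _ wi] L2_scale G)
  then show ?thesis by (simp add: inner_vec_def)
qed

lemma L2_restrict:
  assumes g: "L2 M w g" and A: "A \<in> sets M"
  shows "L2 M (\<lambda>x. indicator A x * w x / c) g"
proof -
  have "integrable M (\<lambda>x. indicator A x *\<^sub>R (g x * g x * w x) / c)"
    using g A unfolding L2_def by (intro integrable_divide_zero integrable_mult_indicator) auto
  then show ?thesis using g unfolding L2_def by (simp add: divide_inverse mult_ac)
qed

section \<open>Linear algebra and the Cauchy--Schwarz step\<close>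

text \<open>Expanding \<open>0 \<le> \<integral> (s - a \<bullet> u)\<^sup>2 w\<close> at \<open>a = J\<inverse> y\<close>: the Cauchy--Schwarz step of the
  Cramer--Rao argument.\<close>
lemma Gram_inverse_bound:
  fixes M :: "'x measure" and w s :: "'x \<Rightarrow> real" and u :: "'x \<Rightarrow> real^'l"
  defines "J \<equiv> \<chi> l m. \<integral>x. u x $ l * u x $ m * w x \<partial>M"
    and "y \<equiv> \<chi> l. \<integral>x. s x * u x $ l * w x \<partial>M"
  assumes w: "\<And>x. x \<in> space M \<Longrightarrow> 0 \<le> w x"
    and ss: "integrable M (\<lambda>x. s x * s x * w x)"
    and uu: "\<And>l m. integrable M (\<lambda>x. u x $ l * u x $ m * w x)"
    and su: "\<And>l. integrable M (\<lambda>x. s x * u x $ l * w x)"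
    and J: "invertible J"
  shows "y \<bullet> (matrix_inv J *v y) \<le> (\<integral>x. s x * s x * w x \<partial>M)"
proof -
  define a where "a = matrix_inv J *v y"
  have "J ** matrix_inv J = mat 1"
    using J unfolding invertible_def matrix_inv_def by (metis (mono_tags, lifting) someI_ex)
  then have Ja: "J *v a = y"
    unfolding a_def by (simp add: matrix_vector_mul_assoc)
  have expand: "(s x - a \<bullet> u x)^2 * w x = s x * s x * w x
      - 2 * (\<Sum>l\<in>UNIV. a$l * (s x * u x $ l * w x))
      + (\<Sum>l\<in>UNIV. \<Sum>m\<in>UNIV. a$l * a$m * (u x $ l * u x $ m * w x))" for x
  proof -
    have "(a \<bullet> u x) * (a \<bullet> u x) * w x
        = (\<Sum>l\<in>UNIV. a$l * u x $ l) * (\<Sum>m\<in>UNIV. a$m * u x $ m) * w x"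
      by (simp add: inner_vec_def)
    also have "\<dots> = (\<Sum>l\<in>UNIV. \<Sum>m\<in>UNIV. a$l * a$m * (u x $ l * u x $ m * w x))"
      by (simp add: sum_distrib_left sum_distrib_right mult.commute mult.left_commute)
    finally show ?thesis
      by (simp add: power2_eq_square inner_vec_def sum_distrib_left sum_distrib_right
          algebra_simps)
  qed
  have "0 \<le> (\<integral>x. (s x - a \<bullet> u x)^2 * w x \<partial>M)"
    by (rule integral_nonneg_AE) (use w in auto)
  also have "\<dots> = (\<integral>x. s x * s x * w x \<partial>M) - 2 * (\<Sum>l\<in>UNIV. a$l * y$l)
      + (\<Sum>l\<in>UNIV. \<Sum>m\<in>UNIV. a$l * a$m * J$l$m)"
    unfolding expand using ss uu su by (simp add: integral_sum integrable_sum J_def y_def)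
  also have "(\<Sum>l\<in>UNIV. a$l * y$l) = a \<bullet> y"
    by (simp add: inner_vec_def)
  also have "(\<Sum>l\<in>UNIV. \<Sum>m\<in>UNIV. a$l * a$m * J$l$m) = a \<bullet> (J *v a)"
    by (simp add: inner_vec_def matrix_vector_mult_def sum_distrib_left algebra_simps)
  finally show ?thesis
    using Ja unfolding a_def by (simp add: inner_commute)
qed

definition qf :: "real^'n^'n \<Rightarrow> real^'n \<Rightarrow> real" where
  "qf M v = v \<bullet> (M *v v)"

lemma qf_add: "qf (M + N) v = qf M v + qf N v"
  unfolding qf_def by (simp add: matrix_vector_mult_add_rdistrib inner_add_right)

lemma qf_diff: "qf (M - N) v = qf M v - qf N v"
  unfolding qf_def by (simp add: matrix_vector_mult_diff_rdistrib inner_diff_right)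

lemma qf_scaleR: "qf (c *\<^sub>R M) v = c * qf M v"
  unfolding qf_def by (simp add: inner_vec_def matrix_vector_mult_def sum_distrib_left mult_ac)

lemma qf_sum: "qf (\<Sum>k\<in>S. M k) v = (\<Sum>k\<in>S. qf (M k) v)"
  by (induction S rule: infinite_finite_induct) (simp_all add: qf_add qf_def[of 0])

lemma qf_outer: "qf (outer a b) v = (v \<bullet> a) * (v \<bullet> b)"
proof -
  have "outer a b *v v = (b \<bullet> v) *\<^sub>R a"
    by (simp add: vec_eq_iff outer_def matrix_vector_mult_def inner_vec_def
        sum_distrib_left mult_ac)
  then show ?thesis unfolding qf_def by (simp add: inner_commute)
qed

lemma qf_congruence: "qf (D ** M ** transpose D) v = qf M (transpose D *v v)"
  unfolding qf_def
  by (simp add: matrix_vector_mul_assoc[symmetric] dot_lmul_matrix[symmetric])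

lemma psd_ge_iff_qf: "psd_ge A B \<longleftrightarrow> (\<forall>v. qf B v \<le> qf A v)"
  unfolding psd_ge_def qf_def
  by (simp add: matrix_vector_mult_diff_rdistrib inner_diff_right)

lemma qf_Emat_outer:
  fixes E :: "'x \<Rightarrow> real^'m"
  assumes "\<And>i j. integrable M (\<lambda>x. E x $ i * E x $ j * f x t)"
  shows "qf (Emat M f (\<lambda>x. outer (E x) (E x)) t) v = (\<integral>x. (v \<bullet> E x)^2 * f x t \<partial>M)"
proof -
  have square: "(v \<bullet> E x)^2 * f x t = (\<Sum>i\<in>UNIV. \<Sum>j\<in>UNIV. v$i * v$j * (E x $ i * E x $ j * f x t))"
    for x
    by (simp add: inner_vec_def power2_eq_square sum_distrib_left sum_distrib_right mult_ac)
  have "qf (Emat M f (\<lambda>x. outer (E x) (E x)) t) v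
      = (\<Sum>i\<in>UNIV. \<Sum>j\<in>UNIV. v$i * v$j * (\<integral>x. E x $ i * E x $ j * f x t \<partial>M))"
    unfolding qf_def Emat_def outer_def
    by (simp add: inner_vec_def matrix_vector_mult_def sum_distrib_left mult_ac)
  also have "\<dots> = (\<integral>x. (v \<bullet> E x)^2 * f x t \<partial>M)"
    unfolding square using assms by (simp add: integral_sum integrable_sum)
  finally show ?thesis .
qed

lemma zp_emb_eq_Dmat:
  assumes "inj idx"
  shows "zp S (emb idx t) = Dmat S idx *v t"
proof (rule vec_eq_iff[THEN iffD2, rule_format])
  fix m
  show "zp S (emb idx t) $ m = (Dmat S idx *v t) $ m"
  proof (cases "m \<in> range idx")
    case True
    then obtain l0 where m: "m = idx l0" by blast
    have "(Dmat S idx *v t) $ m = (if m \<in> S then t $ l0 else 0)"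
      unfolding Dmat_def matrix_vector_mult_def m using assms
      by (simp add: inj_eq if_distrib[where f="\<lambda>c. c * _"] cong: if_cong)
    then show ?thesis using assms by (simp add: zp_def emb_def m)
  qed (auto simp: zp_def emb_def Dmat_def matrix_vector_mult_def intro!: sum.neutral)
qed

lemma sCRB_unbiased:
  fixes th :: "'x \<Rightarrow> real^'m" and t :: "real^'l"
  assumes "\<forall>k\<in>{1..K}. \<forall>s. sel_bias \<mu> f (sel_region \<mu> sel (Lam k)) (Lam k) idx th s = 0"
  shows "sCRB \<mu> f K Lam sel idx th t
    = (\<Sum>k\<in>{k\<in>{1..K}. sel_prob \<mu> f (sel_region \<mu> sel (Lam k)) t \<noteq> 0}.
         sel_prob \<mu> f (sel_region \<mu> sel (Lam k)) t *\<^sub>R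
           (Dmat (Lam k) idx ** matrix_inv (sel_FIM \<mu> f (sel_region \<mu> sel (Lam k)) t)
              ** transpose (Dmat (Lam k) idx)))"
proof -
  have "sel_bias \<mu> f (sel_region \<mu> sel (Lam k)) (Lam k) idx th = (\<lambda>s. 0)" if "k \<in> {1..K}" for k
    using assms that by auto
  moreover have "gradmat (\<lambda>s. 0 :: real^'m) t = 0" "outer (0 :: real^'m) 0 = 0"
    by (simp_all add: gradmat_def partial_at_def outer_def vec_eq_iff)
  ultimately show ?thesis
    unfolding sCRB_def Let_def by (intro sum.cong refl) auto
qed

section \<open>Conditioning on a selection region\<close>

lemma deriv_eq_deriv_ln_mult:
  fixes \<phi> :: "real \<Rightarrow> real"
  assumes nonneg: "\<And>r. 0 \<le> \<phi> r" and diff: "\<phi> differentiable (at a)"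
  shows "deriv \<phi> a = deriv (\<lambda>r. ln (\<phi> r)) a * \<phi> a"
proof -
  have D: "DERIV \<phi> a :> deriv \<phi> a"
    using diff DERIV_deriv_iff_real_differentiable by blast
  show ?thesis
  proof (cases "\<phi> a = 0")
    case True
    then have "deriv \<phi> a = 0"
      by (intro DERIV_local_min[OF D, of 1]) (use nonneg True in auto)
    then show ?thesis using True by simp
  next
    case False
    then have pos: "0 < \<phi> a" using nonneg by (metis less_eq_real_def)
    have "DERIV (\<lambda>r. ln (\<phi> r)) a :> 1 / \<phi> a * deriv \<phi> a"
      using DERIV_chain2[OF DERIV_ln_divide[OF pos] D] by simp
    then show ?thesis using pos by (simp add: DERIV_imp_deriv)
  qed
qed

definition cond_density :: "'x measure \<Rightarrow> ('x \<Rightarrow> 'p \<Rightarrow> real) \<Rightarrow> 'x set \<Rightarrow> 'p \<Rightarrow> 'x \<Rightarrow> real" where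
  "cond_density \<mu> f A t x = indicator A x * cond_pdf \<mu> f A x t"

lemma cond_density_eq: "cond_density \<mu> f A t = (\<lambda>x. indicator A x * f x t / sel_prob \<mu> f A t)"
  by (simp add: fun_eq_iff cond_density_def cond_pdf_def)

lemma cond_exp_eq_integral_cond_density:
  "cond_exp \<mu> f A g t = (\<integral>x. g x * cond_density \<mu> f A t x \<partial>\<mu>)"
  unfolding cond_exp_def cond_density_def set_lebesgue_integral_def
  by (rule Bochner_Integration.integral_cong) (simp_all add: mult_ac)

lemma sel_prob_mult_cond_exp:
  assumes "sel_prob \<mu> f A t \<noteq> 0"
  shows "sel_prob \<mu> f A t * cond_exp \<mu> f A g t = (\<integral>x. indicator A x * (g x * f x t) \<partial>\<mu>)"
proof -
  have "(\<lambda>x. g x * cond_density \<mu> f A t x) = (\<lambda>x. indicator A x * (g x * f x t) / sel_prob \<mu> f A t)"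
    by (simp add: cond_density_def cond_pdf_def fun_eq_iff)
  then show ?thesis
    using assms by (simp add: cond_exp_eq_integral_cond_density)
qed

lemma
  fixes A :: "'i \<Rightarrow> 'x set" and F :: "'x \<Rightarrow> real"
  assumes "finite I"
    and sets: "\<And>k. k \<in> I \<Longrightarrow> A k \<in> sets \<mu>"
    and partition: "\<And>x. x \<in> space \<mu> \<Longrightarrow> \<exists>!k. k \<in> I \<and> x \<in> A k"
    and nonzero: "\<And>k. k \<in> I \<Longrightarrow> sel_prob \<mu> f (A k) t \<noteq> 0"
    and local_form: "\<And>k x. k \<in> I \<Longrightarrow> x \<in> A k \<Longrightarrow> F x = G k x"
    and integrable: "\<And>k. k \<in> I \<Longrightarrow> integrable \<mu> (\<lambda>x. G k x * f x t)"
  shows integrable_partition: "integrable \<mu> (\<lambda>x. F x * f x t)"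
    and integral_partition_cond_exp:
      "(\<integral>x. F x * f x t \<partial>\<mu>) = (\<Sum>k\<in>I. sel_prob \<mu> f (A k) t * cond_exp \<mu> f (A k) (G k) t)"
proof -
  have pointwise: "F x * f x t = (\<Sum>k\<in>I. indicator (A k) x * (G k x * f x t))"
    if x: "x \<in> space \<mu>" for x
  proof -
    obtain k0 where k0: "k0 \<in> I" "x \<in> A k0" and unique: "\<And>k. k \<in> I \<Longrightarrow> x \<in> A k \<Longrightarrow> k = k0"
      using partition[OF x] by blast
    have "indicator (A k) x = (if k = k0 then 1 else (0::real))" if k: "k \<in> I" for k
    proof (cases "k = k0")
      case False
      then have "x \<notin> A k" using unique[OF k] by blast
      then show ?thesis using False by simp
    qed (simp add: k0)
    then have "(\<Sum>k\<in>I. indicator (A k) x * (G k x * f x t)) = (\<Sum>k\<in>I. if k = k0 then G k x * f x t else 0)"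
      by (intro sum.cong) simp_all
    also have "\<dots> = F x * f x t"
      using k0 local_form[OF k0] \<open>finite I\<close> by simp
    finally show ?thesis ..
  qed
  have parts: "integrable \<mu> (\<lambda>x. indicator (A k) x * (G k x * f x t))" if "k \<in> I" for k
    using integrable_mult_indicator[OF sets integrable, OF that that] by simp
  have "integrable \<mu> (\<lambda>x. \<Sum>k\<in>I. indicator (A k) x * (G k x * f x t))"
    by (rule Bochner_Integration.integrable_sum) (rule parts)
  then show "integrable \<mu> (\<lambda>x. F x * f x t)"
  proof (subst Bochner_Integration.integrable_cong)
    show "x \<in> space \<mu> \<Longrightarrow> F x * f x t = (\<Sum>k\<in>I. indicator (A k) x * (G k x * f x t))" for x
      by (rule pointwise)
  qed simp_all
  have "(\<integral>x. F x * f x t \<partial>\<mu>) = (\<integral>x. (\<Sum>k\<in>I. indicator (A k) x * (G k x * f x t)) \<partial>\<mu>)"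
    by (rule Bochner_Integration.integral_cong[OF refl pointwise])
  also have "\<dots> = (\<Sum>k\<in>I. \<integral>x. indicator (A k) x * (G k x * f x t) \<partial>\<mu>)"
    by (rule Bochner_Integration.integral_sum) (rule parts)
  also have "\<dots> = (\<Sum>k\<in>I. sel_prob \<mu> f (A k) t * cond_exp \<mu> f (A k) (G k) t)"
    using nonzero by (simp add: sel_prob_mult_cond_exp)
  finally show "(\<integral>x. F x * f x t \<partial>\<mu>) = (\<Sum>k\<in>I. sel_prob \<mu> f (A k) t * cond_exp \<mu> f (A k) (G k) t)" .
qed

locale parametric_density =
  fixes \<mu> :: "'x measure" and f :: "'x \<Rightarrow> 'p \<Rightarrow> real"
  assumes density_measurable: "(\<lambda>x. f x t) \<in> borel_measurable \<mu>"
    and density_nonneg: "x \<in> space \<mu> \<Longrightarrow> 0 \<le> f x t"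
    and density_integrable: "integrable \<mu> (\<lambda>x. f x t)"
begin

lemma sel_prob_nonneg: "0 \<le> sel_prob \<mu> f A t"
  unfolding sel_prob_def set_lebesgue_integral_def
  by (rule integral_nonneg_AE) (simp add: density_nonneg)

lemma cond_density_nonneg: "x \<in> space \<mu> \<Longrightarrow> 0 \<le> cond_density \<mu> f A t x"
  unfolding cond_density_eq by (simp add: density_nonneg sel_prob_nonneg)

lemma L2_const_density: "L2 \<mu> (\<lambda>x. f x t) (\<lambda>x. c)"
  by (rule L2_const[OF density_integrable])

lemma L2_inner_density:
  "(\<And>i. L2 \<mu> (\<lambda>x. f x t) (\<lambda>x. G x $ i)) \<Longrightarrow> L2 \<mu> (\<lambda>x. f x t) (\<lambda>x. v \<bullet> G x)"
  by (rule L2_inner[OF density_measurable density_nonneg density_integrable])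

lemma L2_diff_density:
  "L2 \<mu> (\<lambda>x. f x t) g \<Longrightarrow> L2 \<mu> (\<lambda>x. f x t) h \<Longrightarrow> L2 \<mu> (\<lambda>x. f x t) (\<lambda>x. g x - h x)"
  by (rule L2_diff[OF density_measurable density_nonneg])

end

locale selection_region = parametric_density \<mu> f
  for \<mu> :: "'x measure" and f :: "'x \<Rightarrow> real^'l \<Rightarrow> real" +
  fixes A :: "'x set"
  assumes region_sets: "A \<in> sets \<mu>"
    and score_measurable: "set_borel_measurable \<mu> A (\<lambda>x. score \<mu> f A x t $ l)"
    and score_square_integrable:
      "set_integrable \<mu> A (\<lambda>x. score \<mu> f A x t $ l * score \<mu> f A x t $ l * cond_pdf \<mu> f A x t)"
    and FIM_invertible: "invertible (sel_FIM \<mu> f A t)"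
    and cond_pdf_partial: "x \<in> A \<Longrightarrow> has_partial (cond_pdf \<mu> f A x) t l"
    and differentiation_under_integral: "g \<in> borel_measurable \<mu> \<Longrightarrow>
      (\<forall>s. set_integrable \<mu> A (\<lambda>x. g x * cond_pdf \<mu> f A x s)) \<Longrightarrow>
      set_integrable \<mu> A (\<lambda>x. g x * partial_at (cond_pdf \<mu> f A x) t l) \<Longrightarrow>
      ((\<lambda>s. LINT x:A|\<mu>. g x * cond_pdf \<mu> f A x (t + s *\<^sub>R axis l 1))
         has_real_derivative (LINT x:A|\<mu>. g x * partial_at (cond_pdf \<mu> f A x) t l)) (at 0)"
begin

text \<open>The score extended by zero outside \<open>A\<close>, so that it is measurable on the whole space.\<close>
definition region_score :: "real^'l \<Rightarrow> 'x \<Rightarrow> real^'l" where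
  "region_score t x = (\<chi> l. indicator A x * score \<mu> f A x t $ l)"

lemma sel_prob_nonzero: "sel_prob \<mu> f A t \<noteq> 0"
proof
  assume "sel_prob \<mu> f A t = 0"
  then have "sel_FIM \<mu> f A t = 0"
    by (simp add: sel_FIM_def cond_exp_def cond_pdf_def vec_eq_iff)
  moreover obtain B where "sel_FIM \<mu> f A t ** B = mat 1"
    using FIM_invertible unfolding invertible_def by blast
  ultimately have "(mat 1 :: real^'l^'l) = 0" by simp
  from arg_cong[OF this, of "\<lambda>M. M $ undefined $ undefined"] show False
    by (simp add: mat_def)
qed

lemma cond_density_measurable: "cond_density \<mu> f A t \<in> borel_measurable \<mu>"
  unfolding cond_density_eq using region_sets density_measurable by measurable

lemma integral_cond_density: "(\<integral>x. cond_density \<mu> f A t x \<partial>\<mu>) = 1"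
proof -
  have "(\<integral>x. cond_density \<mu> f A t x \<partial>\<mu>) = sel_prob \<mu> f A t / sel_prob \<mu> f A t"
    unfolding cond_density_eq sel_prob_def set_lebesgue_integral_def by simp
  then show ?thesis using sel_prob_nonzero by simp
qed

lemma cond_density_integrable: "integrable \<mu> (cond_density \<mu> f A t)"
  unfolding cond_density_eq using integrable_real_mult_indicator[OF region_sets density_integrable]
  by (simp add: mult.commute)

lemma L2_cond_density: "L2 \<mu> (\<lambda>x. f x t) g \<Longrightarrow> L2 \<mu> (cond_density \<mu> f A t) g"
  unfolding cond_density_eq by (rule L2_restrict[OF _ region_sets])

lemma L2_cond_density_const: "L2 \<mu> (cond_density \<mu> f A t) (\<lambda>x. c)"
  by (rule L2_const[OF cond_density_integrable])

lemma cond_density_mult_integrable: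
  "L2 \<mu> (cond_density \<mu> f A t) g \<Longrightarrow> L2 \<mu> (cond_density \<mu> f A t) h
    \<Longrightarrow> integrable \<mu> (\<lambda>x. g x * h x * cond_density \<mu> f A t x)"
  by (rule L2_mult_integrable[OF cond_density_measurable cond_density_nonneg])

lemma cond_exp_diff_const:
  assumes "L2 \<mu> (\<lambda>x. f x t) X"
  shows "cond_exp \<mu> f A (\<lambda>x. X x - c) t = cond_exp \<mu> f A X t - c"
proof -
  have "integrable \<mu> (\<lambda>x. X x * 1 * cond_density \<mu> f A t x)"
    by (intro cond_density_mult_integrable L2_cond_density assms L2_cond_density_const)
  then have "cond_exp \<mu> f A (\<lambda>x. X x - c) t
      = cond_exp \<mu> f A X t - c * (\<integral>x. cond_density \<mu> f A t x \<partial>\<mu>)"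
    using cond_density_integrable
    by (simp add: cond_exp_eq_integral_cond_density left_diff_distrib)
  then show ?thesis by (simp add: integral_cond_density)
qed

lemma cond_exp_square_shift:
  assumes "L2 \<mu> (\<lambda>x. f x t) X"
  shows "cond_exp \<mu> f A (\<lambda>x. (X x - a)^2) t
    = cond_exp \<mu> f A (\<lambda>x. (X x)^2) t - 2 * a * cond_exp \<mu> f A X t + a^2"
proof -
  have X: "L2 \<mu> (cond_density \<mu> f A t) X"
    by (rule L2_cond_density[OF assms])
  have "integrable \<mu> (\<lambda>x. X x * X x * cond_density \<mu> f A t x)"
    and "integrable \<mu> (\<lambda>x. X x * 1 * cond_density \<mu> f A t x)"
    by (intro cond_density_mult_integrable X L2_cond_density_const)+
  note I = this cond_density_integrable
  have "cond_exp \<mu> f A (\<lambda>x. (X x - a)^2) t = (\<integral>x. X x * X x * cond_density \<mu> f A t x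
      - 2 * a * (X x * 1 * cond_density \<mu> f A t x) + a^2 * cond_density \<mu> f A t x \<partial>\<mu>)"
    unfolding cond_exp_eq_integral_cond_density
    by (rule Bochner_Integration.integral_cong) (simp_all add: power2_eq_square algebra_simps)
  also have "\<dots> = (\<integral>x. X x * X x * cond_density \<mu> f A t x \<partial>\<mu>)
      - 2 * a * (\<integral>x. X x * 1 * cond_density \<mu> f A t x \<partial>\<mu>)
      + a^2 * (\<integral>x. cond_density \<mu> f A t x \<partial>\<mu>)"
    using I by (simp add: Bochner_Integration.integral_add Bochner_Integration.integral_diff)
  also have "\<dots> = cond_exp \<mu> f A (\<lambda>x. (X x)^2) t - 2 * a * cond_exp \<mu> f A X t + a^2"
    by (simp add: cond_exp_eq_integral_cond_density integral_cond_density power2_eq_square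
        mult.assoc)
  finally show ?thesis .
qed

lemma cond_exp_inner:
  assumes G: "\<And>i. L2 \<mu> (\<lambda>x. f x t) (\<lambda>x. G x $ i)"
  shows "cond_exp \<mu> f A (\<lambda>x. v \<bullet> G x) t = v \<bullet> cond_expv \<mu> f A G t"
proof -
  have I: "integrable \<mu> (\<lambda>x. G x $ i * 1 * cond_density \<mu> f A t x)" for i
    by (intro cond_density_mult_integrable L2_cond_density G L2_cond_density_const)
  have "cond_exp \<mu> f A (\<lambda>x. v \<bullet> G x) t
      = (\<integral>x. (\<Sum>i\<in>UNIV. v $ i * (G x $ i * 1 * cond_density \<mu> f A t x)) \<partial>\<mu>)"
    by (simp add: cond_exp_eq_integral_cond_density inner_vec_def sum_distrib_right mult.assoc)
  also have "\<dots> = (\<Sum>i\<in>UNIV. v $ i * (\<integral>x. G x $ i * 1 * cond_density \<mu> f A t x \<partial>\<mu>))"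
    using I by (simp add: Bochner_Integration.integral_sum)
  also have "\<dots> = v \<bullet> cond_expv \<mu> f A G t"
    by (simp add: cond_expv_def cond_exp_eq_integral_cond_density inner_vec_def)
  finally show ?thesis .
qed

lemma partial_cond_pdf:
  assumes x: "x \<in> A"
  shows "partial_at (cond_pdf \<mu> f A x) t l = score \<mu> f A x t $ l * cond_pdf \<mu> f A x t"
proof -
  have "x \<in> space \<mu>"
    using x sets.sets_into_space[OF region_sets] by blast
  then have "0 \<le> cond_pdf \<mu> f A x (t + r *\<^sub>R axis l 1)" for r
    by (simp add: cond_pdf_def density_nonneg sel_prob_nonneg)
  then show ?thesis
    using deriv_eq_deriv_ln_mult[of "\<lambda>r. cond_pdf \<mu> f A x (t + r *\<^sub>R axis l 1)" 0]
      cond_pdf_partial[OF x]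
    by (simp add: partial_at_def has_partial_def score_def grad_def)
qed

lemma L2_region_score: "L2 \<mu> (cond_density \<mu> f A t) (\<lambda>x. region_score t x $ l)"
proof -
  have "(\<lambda>x. region_score t x $ l * region_score t x $ l * cond_density \<mu> f A t x)
      = (\<lambda>x. indicator A x *\<^sub>R (score \<mu> f A x t $ l * score \<mu> f A x t $ l * cond_pdf \<mu> f A x t))"
    by (simp add: fun_eq_iff region_score_def cond_density_def indicator_def)
  then show ?thesis
    using score_measurable score_square_integrable
    unfolding L2_def set_borel_measurable_def set_integrable_def region_score_def by simp
qed

text \<open>(C2) combined with the log-derivative identity \<open>\<partial> f = score \<cdot> f\<close> on \<open>A\<close>.\<close>
lemma has_derivative_cond_exp:
  assumes g: "\<And>s. L2 \<mu> (\<lambda>x. f x s) g"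
  shows "((\<lambda>r. cond_exp \<mu> f A g (t + r *\<^sub>R axis l 1)) has_real_derivative
           (\<integral>x. g x * region_score t x $ l * cond_density \<mu> f A t x \<partial>\<mu>)) (at 0)"
proof -
  have score_form: "indicator A x *\<^sub>R (g x * partial_at (cond_pdf \<mu> f A x) t l)
      = g x * region_score t x $ l * cond_density \<mu> f A t x" for x
    by (cases "x \<in> A") (simp_all add: region_score_def cond_density_def partial_cond_pdf)
  have "set_integrable \<mu> A (\<lambda>x. g x * cond_pdf \<mu> f A x s)" for s
  proof -
    have "integrable \<mu> (\<lambda>x. g x * 1 * cond_density \<mu> f A s x)"
      by (intro cond_density_mult_integrable L2_cond_density g L2_cond_density_const)
    then show ?thesis
      unfolding set_integrable_def cond_density_def by (simp add: mult_ac)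
  qed
  moreover have "set_integrable \<mu> A (\<lambda>x. g x * partial_at (cond_pdf \<mu> f A x) t l)"
    unfolding set_integrable_def score_form
    by (intro cond_density_mult_integrable L2_cond_density g L2_region_score)
  moreover have "g \<in> borel_measurable \<mu>"
    using g unfolding L2_def by blast
  ultimately show ?thesis
    using differentiation_under_integral[of g t l]
    unfolding cond_exp_def set_lebesgue_integral_def score_form by simp
qed

lemma region_score_mean_zero:
  "(\<integral>x. region_score t x $ l * cond_density \<mu> f A t x \<partial>\<mu>) = 0"
proof -
  have "cond_exp \<mu> f A (\<lambda>x. 1) s = 1" for s
    by (simp add: cond_exp_eq_integral_cond_density integral_cond_density)
  then have "((\<lambda>r. 1) has_real_derivative
      (\<integral>x. 1 * region_score t x $ l * cond_density \<mu> f A t x \<partial>\<mu>)) (at 0)"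
    using has_derivative_cond_exp[OF L2_const_density, of 1 t l] by simp
  from DERIV_unique[OF this DERIV_const] show ?thesis by simp
qed

lemma sel_FIM_eq_Gram:
  "sel_FIM \<mu> f A t
    = (\<chi> i j. \<integral>x. region_score t x $ i * region_score t x $ j * cond_density \<mu> f A t x \<partial>\<mu>)"
  unfolding sel_FIM_def cond_exp_eq_integral_cond_density vec_eq_iff
  by (auto simp: region_score_def cond_density_def indicator_def intro!: Bochner_Integration.integral_cong)

lemma bias_gradient:
  fixes g :: "'x \<Rightarrow> real^'m" and H :: "real^'l^'m"
  assumes g: "\<And>s i. L2 \<mu> (\<lambda>x. f x s) (\<lambda>x. g x $ i)"
  shows "(H + gradmat (\<lambda>s. cond_expv \<mu> f A (\<lambda>x. g x - H *v s) s) t) $ i $ l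
    = (\<integral>x. g x $ i * region_score t x $ l * cond_density \<mu> f A t x \<partial>\<mu>)"
proof -
  define c where "c = (\<integral>x. g x $ i * region_score t x $ l * cond_density \<mu> f A t x \<partial>\<mu>)"
  have "(\<lambda>r. cond_expv \<mu> f A (\<lambda>x. g x - H *v (t + r *\<^sub>R axis l 1)) (t + r *\<^sub>R axis l 1) $ i)
      = (\<lambda>r. cond_exp \<mu> f A (\<lambda>x. g x $ i) (t + r *\<^sub>R axis l 1) - ((H *v t) $ i + r * H $ i $ l))"
  proof
    fix r
    have "(H *v (t + r *\<^sub>R axis l 1)) $ i = (H *v t) $ i + r * H $ i $ l"
      by (simp add: matrix_vector_right_distrib matrix_vector_mult_scaleR matrix_vector_mult_basis
          column_def)
    then show "cond_expv \<mu> f A (\<lambda>x. g x - H *v (t + r *\<^sub>R axis l 1)) (t + r *\<^sub>R axis l 1) $ i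
        = cond_exp \<mu> f A (\<lambda>x. g x $ i) (t + r *\<^sub>R axis l 1) - ((H *v t) $ i + r * H $ i $ l)"
      using cond_exp_diff_const[OF g] by (simp add: cond_expv_def)
  qed
  moreover have "((\<lambda>r. cond_exp \<mu> f A (\<lambda>x. g x $ i) (t + r *\<^sub>R axis l 1) - ((H *v t) $ i + r * H $ i $ l))
      has_real_derivative c - H $ i $ l) (at 0)"
    unfolding c_def
    by (intro DERIV_diff has_derivative_cond_exp g) (auto intro!: derivative_eq_intros)
  ultimately have "gradmat (\<lambda>s. cond_expv \<mu> f A (\<lambda>x. g x - H *v s) s) t $ i $ l = c - H $ i $ l"
    by (simp add: gradmat_def partial_at_def DERIV_imp_deriv)
  then show ?thesis
    unfolding c_def by simp
qed

lemma qf_inverse_FIM_le: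
  assumes s: "L2 \<mu> (cond_density \<mu> f A t) s"
  shows "qf (matrix_inv (sel_FIM \<mu> f A t))
      (\<chi> l. \<integral>x. s x * region_score t x $ l * cond_density \<mu> f A t x \<partial>\<mu>)
    \<le> (\<integral>x. s x * s x * cond_density \<mu> f A t x \<partial>\<mu>)"
  unfolding qf_def sel_FIM_eq_Gram
proof (rule Gram_inverse_bound)
  show "invertible (\<chi> i j. \<integral>x. region_score t x $ i * region_score t x $ j * cond_density \<mu> f A t x \<partial>\<mu>)"
    using FIM_invertible[of t] unfolding sel_FIM_eq_Gram .
  show "integrable \<mu> (\<lambda>x. s x * s x * cond_density \<mu> f A t x)"
    by (rule cond_density_mult_integrable[OF s s])
  show "integrable \<mu> (\<lambda>x. region_score t x $ i * region_score t x $ j * cond_density \<mu> f A t x)"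
    for i j by (rule cond_density_mult_integrable[OF L2_region_score L2_region_score])
  show "integrable \<mu> (\<lambda>x. s x * region_score t x $ l * cond_density \<mu> f A t x)" for l
    by (rule cond_density_mult_integrable[OF s L2_region_score])
qed (rule cond_density_nonneg)

lemma score_cross_moment:
  fixes g :: "'x \<Rightarrow> real^'m" and H :: "real^'l^'m"
  assumes g: "\<And>s i. L2 \<mu> (\<lambda>x. f x s) (\<lambda>x. g x $ i)"
  shows "(\<integral>x. (v \<bullet> g x - c) * region_score t x $ l * cond_density \<mu> f A t x \<partial>\<mu>)
    = (transpose (H + gradmat (\<lambda>s. cond_expv \<mu> f A (\<lambda>x. g x - H *v s) s) t) *v v) $ l"
proof -
  let ?w = "cond_density \<mu> f A t"
  have score: "integrable \<mu> (\<lambda>x. region_score t x $ l * ?w x)"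
    using cond_density_mult_integrable[OF L2_cond_density_const[where c=1] L2_region_score]
    by simp
  have gs: "integrable \<mu> (\<lambda>x. g x $ i * region_score t x $ l * ?w x)" for i
    by (intro cond_density_mult_integrable L2_cond_density g L2_region_score)
  have "(\<integral>x. (v \<bullet> g x - c) * region_score t x $ l * ?w x \<partial>\<mu>)
      = (\<integral>x. (\<Sum>i\<in>UNIV. v $ i * (g x $ i * region_score t x $ l * ?w x))
           - c * (region_score t x $ l * ?w x) \<partial>\<mu>)"
    by (simp add: inner_vec_def left_diff_distrib sum_distrib_right mult.assoc)
  also have "\<dots> = (\<Sum>i\<in>UNIV. v $ i * (\<integral>x. g x $ i * region_score t x $ l * ?w x \<partial>\<mu>))
      - c * (\<integral>x. region_score t x $ l * ?w x \<partial>\<mu>)"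
    using gs score by (simp add: Bochner_Integration.integral_diff Bochner_Integration.integral_sum
        Bochner_Integration.integrable_sum)
  also have "\<dots> = (transpose (H + gradmat (\<lambda>s. cond_expv \<mu> f A (\<lambda>x. g x - H *v s) s) t) *v v) $ l"
    using bias_gradient[OF g] region_score_mean_zero[of t l]
    by (simp add: vector_matrix_mult_def mult.commute)
  finally show ?thesis .
qed

theorem selective_CRB:
  fixes g :: "'x \<Rightarrow> real^'m" and H :: "real^'l^'m"
  assumes g: "\<And>s i. L2 \<mu> (\<lambda>x. f x s) (\<lambda>x. g x $ i)"
  defines "\<beta> \<equiv> \<lambda>s. cond_expv \<mu> f A (\<lambda>x. g x - H *v s) s"
  shows "qf ((H + gradmat \<beta> t) ** matrix_inv (sel_FIM \<mu> f A t) ** transpose (H + gradmat \<beta> t)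
      + outer (\<beta> t) (\<beta> t)) v
    \<le> cond_exp \<mu> f A (\<lambda>x. (v \<bullet> (g x - H *v t))^2) t"
proof -
  define X where "X x = v \<bullet> (g x - H *v t)" for x
  define s where "s x = X x - v \<bullet> \<beta> t" for x
  have e: "L2 \<mu> (\<lambda>x. f x t) (\<lambda>x. (g x - H *v t) $ i)" for i
    using L2_diff_density[OF g L2_const_density] by simp
  have X: "L2 \<mu> (\<lambda>x. f x t) X"
    unfolding X_def by (rule L2_inner_density[OF e])
  have mean: "cond_exp \<mu> f A X t = v \<bullet> \<beta> t"
    unfolding X_def \<beta>_def by (rule cond_exp_inner[OF e])
  have s: "L2 \<mu> (cond_density \<mu> f A t) s"
    unfolding s_def
    by (intro L2_diff[OF cond_density_measurable cond_density_nonneg] L2_cond_density X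
        L2_cond_density_const)
  have "transpose (H + gradmat \<beta> t) *v v
      = (\<chi> l. \<integral>x. s x * region_score t x $ l * cond_density \<mu> f A t x \<partial>\<mu>)"
    using score_cross_moment[OF g, where c="v \<bullet> (H *v t) + v \<bullet> \<beta> t"]
    by (simp add: vec_eq_iff s_def X_def \<beta>_def inner_diff_right algebra_simps)
  then have "qf ((H + gradmat \<beta> t) ** matrix_inv (sel_FIM \<mu> f A t) ** transpose (H + gradmat \<beta> t)) v
      \<le> (\<integral>x. s x * s x * cond_density \<mu> f A t x \<partial>\<mu>)"
    unfolding qf_congruence using qf_inverse_FIM_le[OF s] by simp
  also have "\<dots> = cond_exp \<mu> f A (\<lambda>x. (X x)^2) t - (v \<bullet> \<beta> t)^2"
    using cond_exp_square_shift[OF X, of "v \<bullet> \<beta> t"] unfolding mean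
    by (simp add: s_def cond_exp_eq_integral_cond_density power2_eq_square)
  finally show ?thesis
    by (simp add: qf_add qf_outer X_def power2_eq_square)
qed

end

section \<open>Averaging over the selection regions\<close>

locale post_selection_estimation = parametric_density \<mu> f
  for \<mu> :: "'x measure" and f :: "'x \<Rightarrow> real^'l \<Rightarrow> real" +
  fixes K :: nat and Lam :: "nat \<Rightarrow> 'm::finite set" and sel :: "'x \<Rightarrow> 'm set"
    and idx :: "'l \<Rightarrow> 'm" and th :: "'x \<Rightarrow> real^'m" and \<theta> :: "real^'m"
  assumes regions: "k \<in> {1..K} \<Longrightarrow> selection_region \<mu> f (sel_region \<mu> sel (Lam k))"
    and Lam_inj: "inj_on Lam {1..K}"
    and sel_range: "x \<in> space \<mu> \<Longrightarrow> sel x \<in> Lam ` {1..K}"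
    and idx_inj: "inj idx"
    and theta_support: "m \<notin> range idx \<Longrightarrow> \<theta> $ m = 0"
    and est_measurable: "th \<in> borel_measurable \<mu>"
    and est_second_moments: "integrable \<mu> (\<lambda>x. (th x $ m)^2 * f x t)"
    and coherent: "x \<in> space \<mu> \<Longrightarrow> m \<notin> sel x \<Longrightarrow> th x $ m = 0"
begin

abbreviation region :: "nat \<Rightarrow> 'x set" where
  "region k \<equiv> sel_region \<mu> sel (Lam k)"

definition sCRB_term :: "nat \<Rightarrow> real^'l \<Rightarrow> real^'m^'m" where
  "sCRB_term k t = (let A = region k; b = sel_bias \<mu> f A (Lam k) idx th;
      DG = Dmat (Lam k) idx + gradmat b t
    in DG ** matrix_inv (sel_FIM \<mu> f A t) ** transpose DG + outer (b t) (b t))"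

lemma region_partition:
  assumes x: "x \<in> space \<mu>"
  shows "\<exists>!k. k \<in> {1..K} \<and> x \<in> region k"
proof -
  obtain k where "k \<in> {1..K}" "sel x = Lam k"
    using sel_range[OF x] by blast
  then show ?thesis
    using x by (intro ex1I[of _ k]) (auto simp: sel_region_def inj_on_eq_iff[OF Lam_inj])
qed

lemma region_sets: "k \<in> {1..K} \<Longrightarrow> region k \<in> sets \<mu>"
  by (rule selection_region.region_sets[OF regions])

lemma sel_prob_region_nonzero: "k \<in> {1..K} \<Longrightarrow> sel_prob \<mu> f (region k) t \<noteq> 0"
  by (rule selection_region.sel_prob_nonzero[OF regions])

lemma sCRB_eq_sum:
  "sCRB \<mu> f K Lam sel idx th t = (\<Sum>k\<in>{1..K}. sel_prob \<mu> f (region k) t *\<^sub>R sCRB_term k t)"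
  unfolding sCRB_def sCRB_term_def using sel_prob_region_nonzero
  by (intro sum.cong) auto

lemma L2_zp_est: "L2 \<mu> (\<lambda>x. f x t) (\<lambda>x. zp S (th x) $ i)"
proof (cases "i \<in> S")
  case True
  have "(\<lambda>x. th x $ i) \<in> borel_measurable \<mu>"
    using est_measurable borel_measurable_nth measurable_compose by blast
  with True show ?thesis
    using est_second_moments[of i t] by (simp add: L2_def zp_def power2_eq_square mult.assoc)
qed (simp add: zp_def L2_const_density)

lemma qf_sCRB_term_le:
  assumes k: "k \<in> {1..K}"
  shows "qf (sCRB_term k t) v
    \<le> cond_exp \<mu> f (region k) (\<lambda>x. (v \<bullet> (zp (Lam k) (th x) - zp (Lam k) (emb idx t)))^2) t"
proof -
  interpret selection_region \<mu> f "region k"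
    by (rule regions[OF k])
  have "sel_bias \<mu> f (region k) (Lam k) idx th
      = (\<lambda>s. cond_expv \<mu> f (region k) (\<lambda>x. zp (Lam k) (th x) - Dmat (Lam k) idx *v s) s)"
    by (simp add: fun_eq_iff sel_bias_def zp_emb_eq_Dmat[OF idx_inj])
  then show ?thesis
    using selective_CRB[OF L2_zp_est[where S="Lam k"], where H="Dmat (Lam k) idx" and t=t and v=v]
    by (simp add: sCRB_term_def Let_def zp_emb_eq_Dmat[OF idx_inj])
qed

lemma qf_Emat_eq_sum_cond_exp:
  assumes local_form: "\<And>k x. k \<in> {1..K} \<Longrightarrow> x \<in> region k \<Longrightarrow> E x = E' k x"
    and L2: "\<And>k i. k \<in> {1..K} \<Longrightarrow> L2 \<mu> (\<lambda>x. f x t) (\<lambda>x. E' k x $ i)"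
  shows "qf (Emat \<mu> f (\<lambda>x. outer (E x) (E x)) t) v
    = (\<Sum>k\<in>{1..K}. sel_prob \<mu> f (region k) t * cond_exp \<mu> f (region k) (\<lambda>x. (v \<bullet> E' k x)^2) t)"
proof -
  note partition = finite_atLeastAtMost region_sets region_partition sel_prob_region_nonzero
  have "integrable \<mu> (\<lambda>x. E x $ i * E x $ j * f x t)" for i j
  proof (rule integrable_partition[where G="\<lambda>k x. E' k x $ i * E' k x $ j", OF partition])
    show "integrable \<mu> (\<lambda>x. E' k x $ i * E' k x $ j * f x t)" if "k \<in> {1..K}" for k
      using L2_mult_integrable[OF density_measurable density_nonneg L2[OF that] L2[OF that]] .
    show "E x $ i * E x $ j = E' k x $ i * E' k x $ j" if "k \<in> {1..K}" "x \<in> region k" for k x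
      using local_form[OF that] by simp
  qed
  then have "qf (Emat \<mu> f (\<lambda>x. outer (E x) (E x)) t) v = (\<integral>x. (v \<bullet> E x)^2 * f x t \<partial>\<mu>)"
    by (rule qf_Emat_outer)
  also have "\<dots> = (\<Sum>k\<in>{1..K}. sel_prob \<mu> f (region k) t * cond_exp \<mu> f (region k) (\<lambda>x. (v \<bullet> E' k x)^2) t)"
  proof (rule integral_partition_cond_exp[OF partition])
    show "integrable \<mu> (\<lambda>x. (v \<bullet> E' k x)^2 * f x t)" if "k \<in> {1..K}" for k
      using L2_inner_density[OF L2[OF that], where v=v]
      by (simp add: L2_def power2_eq_square mult.assoc)
    show "(v \<bullet> E x)^2 = (v \<bullet> E' k x)^2" if "k \<in> {1..K}" "x \<in> region k" for k x
      using local_form[OF that] by simp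
  qed
  finally show ?thesis .
qed

abbreviation theta_Lambda :: "real^'l" where
  "theta_Lambda \<equiv> \<chi> l. \<theta> $ idx l"

abbreviation bias :: "nat \<Rightarrow> real^'l \<Rightarrow> real^'m" where
  "bias k \<equiv> sel_bias \<mu> f (region k) (Lam k) idx th"

lemma emb_theta_Lambda: "emb idx theta_Lambda = \<theta>"
  using theta_support idx_inj by (auto simp: vec_eq_iff emb_def f_inv_into_f)

lemma L2_selected_error:
  "L2 \<mu> (\<lambda>x. f x t) (\<lambda>x. (zp (Lam k) (th x) - zp (Lam k) \<theta>) $ i)"
  using L2_diff_density[OF L2_zp_est L2_const_density] by simp

lemma MSSE_bound:
  "psd_ge (Emat \<mu> f (\<lambda>x. outer (zp (sel x) (th x) - zp (sel x) \<theta>) (zp (sel x) (th x) - zp (sel x) \<theta>))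
      theta_Lambda)
    (sCRB \<mu> f K Lam sel idx th theta_Lambda)"
  (is "psd_ge ?MSSE ?B")
  unfolding psd_ge_iff_qf
proof
  fix v
  have "qf ?B v
      = (\<Sum>k\<in>{1..K}. sel_prob \<mu> f (region k) theta_Lambda * qf (sCRB_term k theta_Lambda) v)"
    by (simp add: sCRB_eq_sum qf_sum qf_scaleR)
  also have "\<dots> \<le> (\<Sum>k\<in>{1..K}. sel_prob \<mu> f (region k) theta_Lambda
      * cond_exp \<mu> f (region k) (\<lambda>x. (v \<bullet> (zp (Lam k) (th x) - zp (Lam k) \<theta>))^2) theta_Lambda)"
    using qf_sCRB_term_le[of _ theta_Lambda v]
    by (intro sum_mono mult_left_mono) (simp_all add: emb_theta_Lambda sel_prob_nonneg)
  also have "\<dots> = qf ?MSSE v"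
    by (rule qf_Emat_eq_sum_cond_exp[symmetric]) (simp add: sel_region_def, rule L2_selected_error)
  finally show "qf ?B v \<le> qf ?MSSE v" .
qed

lemma qf_sCRB_term_shift_le:
  assumes k: "k \<in> {1..K}"
  shows "qf (sCRB_term k theta_Lambda) v + (v \<bullet> c)^2 - 2 * (v \<bullet> c) * (v \<bullet> bias k theta_Lambda)
    \<le> cond_exp \<mu> f (region k) (\<lambda>x. (v \<bullet> (zp (Lam k) (th x) - zp (Lam k) \<theta> - c))^2) theta_Lambda"
proof -
  interpret selection_region \<mu> f "region k"
    by (rule regions[OF k])
  let ?X = "\<lambda>x. v \<bullet> (zp (Lam k) (th x) - zp (Lam k) \<theta>)"
  have "cond_exp \<mu> f (region k) ?X theta_Lambda = v \<bullet> bias k theta_Lambda"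
    using cond_exp_inner[OF L2_selected_error] by (simp add: sel_bias_def emb_theta_Lambda)
  then have "cond_exp \<mu> f (region k) (\<lambda>x. (v \<bullet> (zp (Lam k) (th x) - zp (Lam k) \<theta> - c))^2) theta_Lambda
      = cond_exp \<mu> f (region k) (\<lambda>x. (?X x)^2) theta_Lambda
        - 2 * (v \<bullet> c) * (v \<bullet> bias k theta_Lambda) + (v \<bullet> c)^2"
    using cond_exp_square_shift[OF L2_inner_density[OF L2_selected_error, where v=v], where a="v \<bullet> c"]
    by (simp add: inner_diff_right)
  then show ?thesis
    using qf_sCRB_term_le[OF k, of theta_Lambda v] by (simp add: emb_theta_Lambda)
qed

lemma MSE_bound:
  "psd_ge (Emat \<mu> f (\<lambda>x. outer (th x - \<theta>) (th x - \<theta>)) theta_Lambda)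
    (sCRB \<mu> f K Lam sel idx th theta_Lambda
      + (\<Sum>k=1..K. sel_prob \<mu> f (region k) theta_Lambda *\<^sub>R outer (zp (- Lam k) \<theta>) (zp (- Lam k) \<theta>))
      - (\<Sum>k=1..K. sel_prob \<mu> f (region k) theta_Lambda *\<^sub>R
          (outer (zp (- Lam k) \<theta>) (bias k theta_Lambda) + outer (bias k theta_Lambda) (zp (- Lam k) \<theta>))))"
  (is "psd_ge ?MSE (?B + ?C - ?D)")
  unfolding psd_ge_iff_qf
proof
  fix v
  define e where "e k x = zp (Lam k) (th x) - zp (Lam k) \<theta>" for k x
  define c where "c k = zp (- Lam k) \<theta>" for k
  define \<pi> where "\<pi> k = sel_prob \<mu> f (region k) theta_Lambda" for k
  have "qf (?B + ?C - ?D) v = (\<Sum>k\<in>{1..K}. \<pi> k * (qf (sCRB_term k theta_Lambda) v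
      + (v \<bullet> c k)^2 - 2 * (v \<bullet> c k) * (v \<bullet> bias k theta_Lambda)))"
    by (simp add: \<pi>_def c_def sCRB_eq_sum qf_add qf_diff qf_sum qf_scaleR qf_outer
        sum.distrib sum_subtractf sum_distrib_left power2_eq_square algebra_simps)
  also have "\<dots> \<le> (\<Sum>k\<in>{1..K}. \<pi> k * cond_exp \<mu> f (region k) (\<lambda>x. (v \<bullet> (e k x - c k))^2) theta_Lambda)"
    using qf_sCRB_term_shift_le
    by (intro sum_mono mult_left_mono) (simp_all add: \<pi>_def e_def sel_prob_nonneg)
  also have "\<dots> = qf ?MSE v"
    unfolding \<pi>_def
  proof (rule qf_Emat_eq_sum_cond_exp[symmetric])
    show "th x - \<theta> = e k x - c k" if "k \<in> {1..K}" "x \<in> region k" for k x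
      using that coherent by (auto simp: vec_eq_iff e_def c_def zp_def sel_region_def)
    show "L2 \<mu> (\<lambda>x. f x theta_Lambda) (\<lambda>x. (e k x - c k) $ i)" for k i
      using L2_diff_density[OF L2_selected_error L2_const_density] by (simp add: e_def)
  qed
  finally show "qf (?B + ?C - ?D) v \<le> qf ?MSE v" .
qed

end

theorem theorem1:
  fixes \<mu> :: "'x measure"
    and f :: "'x \<Rightarrow> real^('l::{finite,linorder}) \<Rightarrow> real"
    and K :: nat
    and Lam :: "nat \<Rightarrow> ('m::{finite,linorder}) set"
    and \<Lambda> :: "('m::{finite,linorder}) set"
    and idx :: "('l::{finite,linorder}) \<Rightarrow> ('m::{finite,linorder})"
    and sel :: "'x \<Rightarrow> ('m::{finite,linorder}) set"
    and th :: "'x \<Rightarrow> real^('m::{finite,linorder})"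
    and \<theta> :: "real^('m::{finite,linorder})"
  defines "A \<equiv> (\<lambda>k. sel_region \<mu> sel (Lam k))"
    and "cpdf \<equiv> (\<lambda>k. cond_pdf \<mu> f (sel_region \<mu> sel (Lam k)))"
    and "\<pi> \<equiv> (\<lambda>k. sel_prob \<mu> f (sel_region \<mu> sel (Lam k)))"
    and "b \<equiv> (\<lambda>k. sel_bias \<mu> f (sel_region \<mu> sel (Lam k)) (Lam k) idx th)"
    and "t0 \<equiv> (\<chi> l. \<theta> $ idx l)"
  assumes cand_nonempty: "\<forall>k\<in>{1..K}. Lam k \<noteq> {}"
    and cand_distinct: "inj_on Lam {1..K}"
    and true_supp: "\<Lambda> \<in> Lam ` {1..K}"
    and idx_bij: "bij_betw idx UNIV \<Lambda>"
    and idx_mono: "strict_mono idx"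
    and theta_supp: "\<forall>m. m \<notin> \<Lambda> \<longrightarrow> \<theta> $ m = 0"
    and pdf: "\<forall>t. (\<lambda>x. f x t) \<in> borel_measurable \<mu> \<and> (\<forall>x\<in>space \<mu>. 0 \<le> f x t)
               \<and> integrable \<mu> (\<lambda>x. f x t) \<and> (\<integral>x. f x t \<partial>\<mu>) = 1"
    and sel_range: "\<forall>x\<in>space \<mu>. sel x \<in> Lam ` {1..K}"
    and sel_meas: "\<forall>k\<in>{1..K}. A k \<in> sets \<mu>"
    and est_meas: "th \<in> borel_measurable \<mu>"
    and est_second_moments: "\<forall>t m. integrable \<mu> (\<lambda>x. (th x $ m)^2 * f x t)"
    and coherent: "\<forall>x\<in>space \<mu>. \<forall>m. m \<notin> sel x \<longrightarrow> th x $ m = 0"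
    and bias_diff: "\<forall>k\<in>{1..K}. \<forall>t. b k differentiable (at t)"
    and C1: "\<forall>k\<in>{1..K}. \<forall>t.
               (\<forall>x\<in>A k. \<forall>l. has_partial (\<lambda>s. ln (cpdf k x s)) t l)
             \<and> (\<forall>l. set_borel_measurable \<mu> (A k) (\<lambda>x. score \<mu> f (A k) x t $ l))
             \<and> (\<forall>i j. set_integrable \<mu> (A k)
                   (\<lambda>x. score \<mu> f (A k) x t $ i * score \<mu> f (A k) x t $ j * cpdf k x t))
             \<and> invertible (sel_FIM \<mu> f (A k) t)"
    and C2_exists: "\<forall>k\<in>{1..K}. \<forall>t. \<forall>x\<in>A k. \<forall>l. has_partial (cpdf k x) t l"
    and C2: "\<forall>k\<in>{1..K}. \<forall>g\<in>borel_measurable \<mu>. \<forall>t l.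
               (\<forall>s. set_integrable \<mu> (A k) (\<lambda>x. g x * cpdf k x s))
             \<and> set_integrable \<mu> (A k) (\<lambda>x. g x * partial_at (cpdf k x) t l)
             \<longrightarrow> ((\<lambda>s. LINT x:A k|\<mu>. g x * cpdf k x (t + s *\<^sub>R axis l 1))
                    has_real_derivative (LINT x:A k|\<mu>. g x * partial_at (cpdf k x) t l)) (at 0)"
  shows "psd_ge (Emat \<mu> f (\<lambda>x. outer (zp (sel x) (th x) - zp (sel x) \<theta>)
                                      (zp (sel x) (th x) - zp (sel x) \<theta>)) t0)
                (sCRB \<mu> f K Lam sel idx th t0)
       \<and> psd_ge (Emat \<mu> f (\<lambda>x. outer (th x - \<theta>) (th x - \<theta>)) t0)
                (sCRB \<mu> f K Lam sel idx th t0
                 + (\<Sum>k=1..K. \<pi> k t0 *\<^sub>R outer (zp (- Lam k) \<theta>) (zp (- Lam k) \<theta>))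
                 - (\<Sum>k=1..K. \<pi> k t0 *\<^sub>R (outer (zp (- Lam k) \<theta>) (b k t0)
                                            + outer (b k t0) (zp (- Lam k) \<theta>))))
       \<and> ((\<forall>k\<in>{1..K}. \<forall>s. b k s = 0) \<longrightarrow>
            sCRB \<mu> f K Lam sel idx th t0
              = (\<Sum>k\<in>{k\<in>{1..K}. \<pi> k t0 \<noteq> 0}.
                   \<pi> k t0 *\<^sub>R (Dmat (Lam k) idx ** matrix_inv (sel_FIM \<mu> f (A k) t0)
                                   ** transpose (Dmat (Lam k) idx))))"
proof -
  note defs = A_def cpdf_def \<pi>_def b_def t0_def
  have "selection_region \<mu> f (A k)" if k: "k \<in> {1..K}" for k
    using pdf sel_meas C1 C2 C2_exists k unfolding defs by unfold_locales blast+
  then have "post_selection_estimation \<mu> f K Lam sel idx th \<theta>"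
    using pdf cand_distinct sel_range idx_bij theta_supp est_meas est_second_moments coherent
    unfolding A_def
    by (intro post_selection_estimation.intro post_selection_estimation_axioms.intro
        parametric_density.intro) (auto simp: bij_betw_def)
  then interpret post_selection_estimation \<mu> f K Lam sel idx th \<theta> .
  show ?thesis
    unfolding defs using MSSE_bound MSE_bound sCRB_unbiased by blast
qed

end
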